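(* Let $G$ be a finite group. Then the non-inverse graph $\Gamma_{NI}(G)$ is minimally edge connected if and only if either every non-identity element of $G$ is self-inverse, or no non-identity element of $G$ is self-inverse.
   Context: The non-inverse graph $\Gamma_{NI}(G)$ of a group $G$ is the simple undirected graph with vertex set $G$ in which two distinct elements $x,y$ are adjacent if and only if $y\neq x^{-1}$. An element $x$ is self-inverse if $x=x^{-1}$. For a connected graph $\Gamma$, an edge cut-set is a set $S$ of edges such that $\Gamma-S$ is disconnected or has just one vertex, and the edge connectivity $\kappa'(\Gamma)$ is the smallest size of an edge cut-set. $\Gamma$ is minimally edge connected if $\kappa'(\Gamma-\epsilon)=\kappa'(\Gamma)-1$ for every edge $\epsilon$ of $\Gamma$. *)

theory Defs
  imports "HOL-Algebra.Group"
begin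

text \<open>Simple undirected graphs are given by a vertex set V and a set E of
  2-element subsets of V (edges).\<close>

definition adj_rel :: "'a set set \<Rightarrow> ('a \<times> 'a) set" where
  "adj_rel E = {(x, y). {x, y} \<in> E}"

definition graph_connected :: "'a set \<Rightarrow> 'a set set \<Rightarrow> bool" where
  "graph_connected V E \<longleftrightarrow> (\<forall>x\<in>V. \<forall>y\<in>V. (x, y) \<in> (adj_rel E)\<^sup>*)"

definition is_edge_cut :: "'a set \<Rightarrow> 'a set set \<Rightarrow> 'a set set \<Rightarrow> bool" where
  "is_edge_cut V E S \<longleftrightarrow> S \<subseteq> E \<and> finite S \<and>
     (\<not> graph_connected V (E - S) \<or> card V = 1)"

definition edge_connectivity :: "'a set \<Rightarrow> 'a set set \<Rightarrow> nat" where
  "edge_connectivity V E = (LEAST k. \<exists>S. is_edge_cut V E S \<and> card S = k)"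

definition min_edge_connected :: "'a set \<Rightarrow> 'a set set \<Rightarrow> bool" where
  "min_edge_connected V E \<longleftrightarrow> graph_connected V E \<and>
     (\<forall>e\<in>E. edge_connectivity V (E - {e}) = edge_connectivity V E - 1)"

definition NI_edges :: "('a, 'b) monoid_scheme \<Rightarrow> 'a set set" where
  "NI_edges G = {{x, y} | x y. x \<in> carrier G \<and> y \<in> carrier G \<and> x \<noteq> y \<and> y \<noteq> inv\<^bsub>G\<^esub> x}"

end

theory Submission
  imports Defs
begin

text \<open>The non-inverse graph is the complete graph minus the matching \<open>{x, x\<inverse>}\<close> of the
  non-self-inverse elements. Across any bipartition \<open>(A, B)\<close> at most \<open>min |A| |B|\<close> pairs are
  missing edges, and \<open>|A||B| - min |A| |B| \<ge> n - 2\<close>; so its edge connectivity is \<open>n - 1\<close> if the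
  graph is complete and \<open>n - 2\<close> otherwise (a vertex of minimal degree gives the upper bound).
  Deleting an edge lowers edge connectivity by at most one, and by exactly one whenever an
  endpoint of the edge has minimal degree. If every element is self-inverse, or none except \<open>\<one>\<close>
  is, every edge has such an endpoint. In the mixed case, deleting the edge \<open>{\<one>, t}\<close> with
  \<open>t = t\<inverse> \<noteq> \<one>\<close> leaves the complement a matching, so the connectivity stays \<open>n - 2\<close>.\<close>

lemma edge_connectivity_le: "is_edge_cut V E S \<Longrightarrow> edge_connectivity V E \<le> card S"
  unfolding edge_connectivity_def by (rule Least_le) blast

lemma is_edge_cut_all:
  assumes "finite V" "V \<noteq> {}" "finite E"
  shows "is_edge_cut V E E"
proof (cases "card V = 1")
  case True
  then show ?thesis using assms unfolding is_edge_cut_def by auto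
next
  case False
  then obtain u w where "u \<in> V" "w \<in> V" "u \<noteq> w"
    using assms card_le_Suc0_iff_eq[OF assms(1)] by (metis card_0_eq le_Suc_eq le_zero_eq One_nat_def)
  moreover have "(u, w) \<notin> (adj_rel (E - E))\<^sup>*" using \<open>u \<noteq> w\<close> by (simp add: adj_rel_def)
  ultimately have "\<not> graph_connected V (E - E)" unfolding graph_connected_def by blast
  then show ?thesis using assms unfolding is_edge_cut_def by auto
qed

lemma edge_connectivity_attained:
  assumes "finite V" "V \<noteq> {}" "finite E"
  obtains S where "is_edge_cut V E S" "card S = edge_connectivity V E"
proof -
  have "is_edge_cut V E E" by (rule is_edge_cut_all[OF assms])
  then have "\<exists>S. is_edge_cut V E S \<and> card S = edge_connectivity V E"
    unfolding edge_connectivity_def by - (rule LeastI_ex, blast)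
  then show ?thesis using that by blast
qed

lemma edge_connectivity_Diff_singleton_ge:
  assumes "finite V" "V \<noteq> {}" "finite E" "e \<in> E"
  shows "edge_connectivity V E \<le> edge_connectivity V (E - {e}) + 1"
proof -
  obtain S where S: "is_edge_cut V (E - {e}) S" "card S = edge_connectivity V (E - {e})"
    using edge_connectivity_attained[of V "E - {e}"] assms by blast
  have "E - insert e S = E - {e} - S" by blast
  then have "is_edge_cut V E (insert e S)" using S(1) assms(4) unfolding is_edge_cut_def by auto
  moreover have "card (insert e S) = card S + 1"
    using S(1) unfolding is_edge_cut_def by (subst card_insert_disjoint) auto
  ultimately show ?thesis using S(2) edge_connectivity_le by fastforce
qed

lemma graph_connected_if_edge_connectivity_pos:
  assumes "0 < edge_connectivity V E"
  shows "graph_connected V E"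
proof (cases "card V = 1")
  case True
  then obtain a where "V = {a}" by (auto simp: card_Suc_eq)
  then show ?thesis unfolding graph_connected_def by auto
next
  case False
  show ?thesis
  proof (rule ccontr)
    assume "\<not> graph_connected V E"
    then have "is_edge_cut V E {}" unfolding is_edge_cut_def by auto
    then show False using edge_connectivity_le[of V E "{}"] assms by simp
  qed
qed

lemma incident_edges_is_edge_cut:
  assumes "v \<in> V" "w \<in> V" "v \<noteq> w" "finite E"
  shows "is_edge_cut V E {f\<in>E. v \<in> f}"
proof -
  have "(v, w) \<notin> (adj_rel (E - {f\<in>E. v \<in> f}))\<^sup>*"
  proof
    assume "(v, w) \<in> (adj_rel (E - {f\<in>E. v \<in> f}))\<^sup>*"
    then show False
      by (cases rule: converse_rtranclE) (use assms in \<open>auto simp: adj_rel_def\<close>)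
  qed
  then show ?thesis using assms unfolding is_edge_cut_def graph_connected_def by auto
qed

lemma disconnected_separation:
  assumes "\<not> graph_connected V E"
  obtains A B where "A \<union> B = V" "A \<inter> B = {}" "A \<noteq> {}" "B \<noteq> {}"
    "\<And>x y. x \<in> A \<Longrightarrow> y \<in> B \<Longrightarrow> {x, y} \<notin> E"
proof -
  obtain u w where uw: "u \<in> V" "w \<in> V" "(u, w) \<notin> (adj_rel E)\<^sup>*"
    using assms unfolding graph_connected_def by auto
  define A where "A = {y\<in>V. (u, y) \<in> (adj_rel E)\<^sup>*}"
  have "{x, y} \<notin> E" if "x \<in> A" "y \<in> V - A" for x y
  proof
    assume "{x, y} \<in> E"
    then have "(x, y) \<in> adj_rel E" unfolding adj_rel_def by auto
    then have "(u, y) \<in> (adj_rel E)\<^sup>*" using that(1) unfolding A_def by auto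
    then show False using that unfolding A_def by simp
  qed
  moreover have "u \<in> A" "w \<in> V - A" using uw unfolding A_def by auto
  ultimately show ?thesis using that[of A "V - A"] unfolding A_def by blast
qed

text \<open>A cut separating \<open>A\<close> from \<open>B\<close> contains all crossing edges, and the crossing edges and
  crossing non-edges together are the \<open>|A||B|\<close> pairs.\<close>

lemma edge_connectivity_ge_by_bipartitions:
  assumes "finite V" "V \<noteq> {}" "finite E" "card V = 1 \<Longrightarrow> k = 0"
    and bip: "\<And>A B. A \<union> B = V \<Longrightarrow> A \<inter> B = {} \<Longrightarrow> A \<noteq> {} \<Longrightarrow> B \<noteq> {} \<Longrightarrow>
        k + card {(x, y) \<in> A \<times> B. {x, y} \<notin> E} \<le> card A * card B"
  shows "k \<le> edge_connectivity V E"
proof -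
  obtain S where S: "is_edge_cut V E S" "card S = edge_connectivity V E"
    using edge_connectivity_attained[OF assms(1-3)] .
  show ?thesis
  proof (cases "card V = 1")
    case True
    then show ?thesis using assms(4) by simp
  next
    case False
    then have "\<not> graph_connected V (E - S)" using S unfolding is_edge_cut_def by auto
    then obtain A B where AB: "A \<union> B = V" "A \<inter> B = {}" "A \<noteq> {}" "B \<noteq> {}"
      and sep: "\<And>x y. x \<in> A \<Longrightarrow> y \<in> B \<Longrightarrow> {x, y} \<notin> E - S"
      by (rule disconnected_separation) (rule that)
    have fin: "finite A" "finite B" using AB(1) assms(1) by auto
    let ?edges = "{(x, y) \<in> A \<times> B. {x, y} \<in> E}"
    let ?nonedges = "{(x, y) \<in> A \<times> B. {x, y} \<notin> E}"
    have "card ?edges \<le> card S"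
    proof (rule card_inj_on_le[where f = "\<lambda>(x, y). {x, y}"])
      show "inj_on (\<lambda>(x, y). {x, y}) ?edges"
        using AB(2) by (auto simp: inj_on_def doubleton_eq_iff)
    qed (use S sep in \<open>auto simp: is_edge_cut_def\<close>)
    moreover have "card ?edges + card ?nonedges = card A * card B"
    proof -
      have "card A * card B = card (?edges \<union> ?nonedges)"
        by (simp add: card_cartesian_product[symmetric]) (rule arg_cong[where f = card], blast)
      also have "\<dots> = card ?edges + card ?nonedges"
        by (rule card_Un_disjoint) (use fin in \<open>auto intro: finite_subset[of _ "A \<times> B"]\<close>)
      finally show ?thesis by simp
    qed
    ultimately show ?thesis using bip[OF AB] S(2) by linarith
  qed
qed

lemma add_min_le_mult:
  assumes "1 \<le> (a::nat)" "1 \<le> b"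
  shows "a + b - 2 + min a b \<le> a * b"
proof -
  obtain a' b' where "a = Suc a'" "b = Suc b'" using assms by (metis Suc_le_D One_nat_def)
  moreover have "min a' b' \<le> a' * b'" by (cases a') (auto simp: min_def)
  ultimately show ?thesis by simp
qed

lemma add_le_mult:
  assumes "1 \<le> (a::nat)" "1 \<le> b"
  shows "a + b - 1 \<le> a * b"
  using add_min_le_mult[OF assms] assms by linarith

lemma edge_connectivity_complete_ge:
  assumes "finite V" "V \<noteq> {}" "finite E"
    and "\<And>x y. x \<in> V \<Longrightarrow> y \<in> V \<Longrightarrow> x \<noteq> y \<Longrightarrow> {x, y} \<in> E"
  shows "card V - 1 \<le> edge_connectivity V E"
proof (rule edge_connectivity_ge_by_bipartitions[OF assms(1-3)])
  fix A B assume AB: "A \<union> B = V" "A \<inter> B = {}" "A \<noteq> {}" "B \<noteq> {}"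
  then have sizes: "card A + card B = card V" "1 \<le> card A" "1 \<le> card B"
    using assms(1) by (auto simp: card_Un_disjoint[symmetric] Suc_le_eq card_gt_0_iff)
  have no_nonedges: "{(x, y) \<in> A \<times> B. {x, y} \<notin> E} = {}" using AB assms(4) by blast
  show "card V - 1 + card {(x, y) \<in> A \<times> B. {x, y} \<notin> E} \<le> card A * card B"
    unfolding no_nonedges using add_le_mult[OF sizes(2,3)] sizes(1) by simp
qed simp

text \<open>The missing crossing pairs are determined by either coordinate, so there are at most
  \<open>min |A| |B|\<close> of them.\<close>

lemma edge_connectivity_ge_if_unique_nonneighbour:
  assumes "finite V" "V \<noteq> {}" "finite E"
    and nonneighbour: "\<And>x y. x \<in> V \<Longrightarrow> y \<in> V \<Longrightarrow> x \<noteq> y \<Longrightarrow> {x, y} \<notin> E \<Longrightarrow> y = m x"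
  shows "card V - 2 \<le> edge_connectivity V E"
proof (rule edge_connectivity_ge_by_bipartitions[OF assms(1-3)])
  fix A B assume AB: "A \<union> B = V" "A \<inter> B = {}" "A \<noteq> {}" "B \<noteq> {}"
  have fin: "finite A" "finite B" using AB(1) assms(1) by auto
  then have sizes: "card A + card B = card V" "1 \<le> card A" "1 \<le> card B"
    using AB by (auto simp: card_Un_disjoint[symmetric] Suc_le_eq card_gt_0_iff)
  let ?nonedges = "{(x, y) \<in> A \<times> B. {x, y} \<notin> E}"
  have determined: "y = m x \<and> x = m y" if "x \<in> A" "y \<in> B" "{x, y} \<notin> E" for x y
  proof -
    have "x \<in> V" "y \<in> V" "x \<noteq> y" "y \<noteq> x" "{y, x} \<notin> E"
      using that AB by (auto simp: insert_commute)
    then show ?thesis using nonneighbour[of x y] nonneighbour[of y x] that(3) by blast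
  qed
  have inj: "inj_on fst ?nonedges" "inj_on snd ?nonedges"
    by (intro inj_onI; clarsimp; metis determined)+
  have "card ?nonedges \<le> card A" by (rule card_inj_on_le[OF inj(1)]) (use fin in auto)
  moreover have "card ?nonedges \<le> card B" by (rule card_inj_on_le[OF inj(2)]) (use fin in auto)
  ultimately show "card V - 2 + card ?nonedges \<le> card A * card B"
    using add_min_le_mult[OF sizes(2,3)] sizes(1) by linarith
qed simp

lemma min_edge_connected_if_card_eq_1:
  assumes "card V = 1"
  shows "min_edge_connected V E"
proof -
  have "edge_connectivity V E' = 0" for E'
    using edge_connectivity_le[of V E' "{}"] assms unfolding is_edge_cut_def by simp
  moreover obtain a where "V = {a}" using assms by (auto simp: card_Suc_eq)
  ultimately show ?thesis unfolding min_edge_connected_def graph_connected_def by simp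
qed

text \<open>Deleting an edge at a vertex of degree \<open>\<kappa>'\<close> leaves that vertex with degree \<open>\<kappa>' - 1\<close>.\<close>

lemma min_edge_connected_if_edges_meet_min_degree:
  assumes "finite V" "V \<noteq> {}" "finite E" "0 < edge_connectivity V E"
    and "\<And>e. e \<in> E \<Longrightarrow> \<exists>v w. e = {v, w} \<and> v \<in> V \<and> w \<in> V \<and> v \<noteq> w \<and>
           card {f\<in>E. v \<in> f} \<le> edge_connectivity V E"
  shows "min_edge_connected V E"
  unfolding min_edge_connected_def
proof (intro conjI ballI)
  show "graph_connected V E" using graph_connected_if_edge_connectivity_pos assms(4) .
next
  fix e assume e: "e \<in> E"
  then obtain v w where vw: "e = {v, w}" "v \<in> V" "w \<in> V" "v \<noteq> w"
    and deg: "card {f\<in>E. v \<in> f} \<le> edge_connectivity V E"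
    using assms(5) by blast
  have "is_edge_cut V (E - {e}) {f\<in>E - {e}. v \<in> f}"
    using vw assms(3) by (intro incident_edges_is_edge_cut) auto
  moreover have "{f\<in>E - {e}. v \<in> f} = {f\<in>E. v \<in> f} - {e}" by blast
  ultimately have "edge_connectivity V (E - {e}) \<le> card ({f\<in>E. v \<in> f} - {e})"
    using edge_connectivity_le by metis
  also have "\<dots> = card {f\<in>E. v \<in> f} - 1" using e vw assms(3) by (intro card_Diff_singleton) auto
  finally show "edge_connectivity V (E - {e}) = edge_connectivity V E - 1"
    using deg edge_connectivity_Diff_singleton_ge[OF assms(1-3) e] by linarith
qed

lemma finite_NI_edges: "finite (carrier G) \<Longrightarrow> finite (NI_edges G)"
  by (rule finite_subset[of _ "Pow (carrier G)"]) (auto simp: NI_edges_def)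

lemma NI_edgesE:
  assumes "f \<in> NI_edges G"
  obtains x y where "f = {x, y}" "x \<in> carrier G" "y \<in> carrier G" "x \<noteq> y" "y \<noteq> inv\<^bsub>G\<^esub> x"
  using assms unfolding NI_edges_def by blast

lemma (in group) NI_edges_iff:
  assumes "x \<in> carrier G" "y \<in> carrier G" "x \<noteq> y"
  shows "{x, y} \<in> NI_edges G \<longleftrightarrow> y \<noteq> inv x"
proof
  assume "{x, y} \<in> NI_edges G"
  then obtain x' y' where "{x, y} = {x', y'}" "x' \<in> carrier G" "y' \<in> carrier G" "y' \<noteq> inv x'"
    by (rule NI_edgesE)
  then show "y \<noteq> inv x" using assms by (auto simp: doubleton_eq_iff)
next
  assume "y \<noteq> inv x"
  then show "{x, y} \<in> NI_edges G" using assms unfolding NI_edges_def by blast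
qed

lemma (in group) card_NI_incident_le:
  assumes "finite (carrier G)" "v \<in> carrier G"
  shows "card {f\<in>NI_edges G. v \<in> f} \<le> card (carrier G) - card {v, inv v}"
proof -
  have "{f\<in>NI_edges G. v \<in> f} \<subseteq> (\<lambda>y. {v, y}) ` (carrier G - {v, inv v})"
  proof
    fix f assume "f \<in> {f\<in>NI_edges G. v \<in> f}"
    then obtain x y where f: "f = {x, y}" "x \<in> carrier G" "y \<in> carrier G" "x \<noteq> y"
      "y \<noteq> inv x" "v \<in> f"
      by (auto elim: NI_edgesE)
    then have "x \<noteq> inv y" by (metis inv_inv)
    then show "f \<in> (\<lambda>y. {v, y}) ` (carrier G - {v, inv v})"
      using f by (auto simp: insert_commute)
  qed
  then have "card {f\<in>NI_edges G. v \<in> f} \<le> card ((\<lambda>y. {v, y}) ` (carrier G - {v, inv v}))"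
    using assms(1) by (intro card_mono) auto
  also have "\<dots> \<le> card (carrier G - {v, inv v})" using assms(1) by (intro card_image_le) auto
  also have "\<dots> = card (carrier G) - card {v, inv v}"
    using assms by (intro card_Diff_subset) auto
  finally show ?thesis .
qed

lemma (in group) card_carrier_ge_3:
  assumes "finite (carrier G)" "x \<in> carrier G" "inv x \<noteq> x"
  shows "3 \<le> card (carrier G)"
proof -
  have "x \<noteq> \<one>" "inv x \<noteq> \<one>" using assms by (metis inv_one inv_inv)+
  then have "card {\<one>, x, inv x} = 3" using assms(3) by simp
  moreover have "{\<one>, x, inv x} \<subseteq> carrier G" using assms(2) by simp
  ultimately show ?thesis by (metis card_mono assms(1))
qed

lemma (in group) NI_edge_connectivity_le:
  assumes "finite (carrier G)" "v \<in> carrier G" "inv v \<noteq> v"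
  shows "edge_connectivity (carrier G) (NI_edges G) \<le> card (carrier G) - 2"
proof -
  have "is_edge_cut (carrier G) (NI_edges G) {f\<in>NI_edges G. v \<in> f}"
    using assms by (intro incident_edges_is_edge_cut[where w = "inv v"] finite_NI_edges) auto
  moreover have "card {v, inv v} = 2" using assms(3) by simp
  ultimately show ?thesis
    using edge_connectivity_le card_NI_incident_le[OF assms(1,2)] by fastforce
qed

lemma (in group) NI_edge_connectivity_ge:
  assumes "finite (carrier G)"
  shows "card (carrier G) - 2 \<le> edge_connectivity (carrier G) (NI_edges G)"
  by (rule edge_connectivity_ge_if_unique_nonneighbour[where m = "\<lambda>x. inv x"])
    (use assms finite_NI_edges NI_edges_iff in auto)

lemma (in group) NI_edge_connectivity_ge_if_self_inverse:
  assumes "finite (carrier G)" "\<forall>x\<in>carrier G. inv x = x"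
  shows "card (carrier G) - 1 \<le> edge_connectivity (carrier G) (NI_edges G)"
  by (rule edge_connectivity_complete_ge) (use assms finite_NI_edges NI_edges_iff in auto)

text \<open>After deleting an edge \<open>{s, t}\<close> between self-inverse elements, \<open>s\<close> and \<open>t\<close> become each
  other's unique non-neighbour, so the non-edges still form a matching.\<close>

lemma (in group) NI_edge_connectivity_Diff_self_inverse_ge:
  assumes "finite (carrier G)" "inv s = s" "inv t = t"
  shows "card (carrier G) - 2 \<le> edge_connectivity (carrier G) (NI_edges G - {{s, t}})"
proof (rule edge_connectivity_ge_if_unique_nonneighbour
    [where m = "\<lambda>x. if x = s then t else if x = t then s else inv x"])
  fix x y assume "x \<in> carrier G" "y \<in> carrier G" "x \<noteq> y" "{x, y} \<notin> NI_edges G - {{s, t}}"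
  then show "y = (if x = s then t else if x = t then s else inv x)"
    using assms NI_edges_iff by (auto simp: doubleton_eq_iff)
qed (use assms finite_NI_edges in auto)

lemma (in group) NI_not_min_edge_connected_if_mixed:
  assumes "finite (carrier G)" "t \<in> carrier G" "t \<noteq> \<one>" "inv t = t"
    and "x \<in> carrier G" "inv x \<noteq> x"
  shows "\<not> min_edge_connected (carrier G) (NI_edges G)"
proof
  assume "min_edge_connected (carrier G) (NI_edges G)"
  moreover have "{\<one>, t} \<in> NI_edges G" using assms(2,3) NI_edges_iff by simp
  ultimately have "edge_connectivity (carrier G) (NI_edges G - {{\<one>, t}}) =
      edge_connectivity (carrier G) (NI_edges G) - 1"
    unfolding min_edge_connected_def by blast
  moreover have "card (carrier G) - 2 \<le> edge_connectivity (carrier G) (NI_edges G - {{\<one>, t}})"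
    using assms(1,4) by (intro NI_edge_connectivity_Diff_self_inverse_ge) auto
  moreover have "edge_connectivity (carrier G) (NI_edges G) \<le> card (carrier G) - 2"
    using NI_edge_connectivity_le[OF assms(1,5,6)] .
  moreover have "3 \<le> card (carrier G)" using card_carrier_ge_3[OF assms(1,5,6)] .
  ultimately show False by linarith
qed

text \<open>In both uniform cases every vertex other than \<open>\<one>\<close> has minimum degree, and every edge has
  an endpoint other than \<open>\<one>\<close>.\<close>

lemma (in group) NI_min_edge_connected_if_uniform:
  assumes "finite (carrier G)"
    and "(\<forall>x\<in>carrier G. inv x = x) \<or> (\<forall>x\<in>carrier G. x \<noteq> \<one> \<longrightarrow> inv x \<noteq> x)"
  shows "min_edge_connected (carrier G) (NI_edges G)"
proof (cases "card (carrier G) = 1")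
  case True
  then show ?thesis by (rule min_edge_connected_if_card_eq_1)
next
  case False
  let ?\<kappa> = "edge_connectivity (carrier G) (NI_edges G)"
  have "card (carrier G) \<noteq> 0" using assms(1) by auto
  then have n2: "2 \<le> card (carrier G)" using False by linarith
  have min_degree: "0 < ?\<kappa> \<and> (\<forall>v\<in>carrier G. v \<noteq> \<one> \<longrightarrow> card {f\<in>NI_edges G. v \<in> f} \<le> ?\<kappa>)"
  proof (cases "\<forall>x\<in>carrier G. inv x = x")
    case True
    then show ?thesis
      using NI_edge_connectivity_ge_if_self_inverse[OF assms(1)] card_NI_incident_le[OF assms(1)] n2
      by fastforce
  next
    case False
    then obtain x where x: "x \<in> carrier G" "inv x \<noteq> x" by blast
    with assms(2) have "\<forall>v\<in>carrier G. v \<noteq> \<one> \<longrightarrow> card {v, inv v} = 2" by (metis inv_one card_2_iff)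
    then show ?thesis
      using NI_edge_connectivity_ge[OF assms(1)] card_NI_incident_le[OF assms(1)]
        card_carrier_ge_3[OF assms(1) x]
      by fastforce
  qed
  show ?thesis
  proof (rule min_edge_connected_if_edges_meet_min_degree)
    fix e assume "e \<in> NI_edges G"
    then obtain x y where xy: "e = {x, y}" "x \<in> carrier G" "y \<in> carrier G" "x \<noteq> y"
      by (rule NI_edgesE)
    then consider "x \<noteq> \<one>" | "y \<noteq> \<one>" by blast
    then show "\<exists>v w. e = {v, w} \<and> v \<in> carrier G \<and> w \<in> carrier G \<and> v \<noteq> w \<and>
        card {f\<in>NI_edges G. v \<in> f} \<le> ?\<kappa>"
      by cases (use xy min_degree in \<open>auto simp: insert_commute\<close>)
  qed (use assms(1) finite_NI_edges min_degree in auto)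
qed

theorem mainTheorem6:
  fixes G :: "('a, 'b) monoid_scheme"
  assumes "group G" and "finite (carrier G)"
  shows "min_edge_connected (carrier G) (NI_edges G) \<longleftrightarrow>
    ((\<forall>x\<in>carrier G. x \<noteq> \<one>\<^bsub>G\<^esub> \<longrightarrow> inv\<^bsub>G\<^esub> x = x) \<or>
     (\<forall>x\<in>carrier G. x \<noteq> \<one>\<^bsub>G\<^esub> \<longrightarrow> inv\<^bsub>G\<^esub> x \<noteq> x))"
proof -
  interpret group G by fact
  have "(\<forall>x\<in>carrier G. x \<noteq> \<one>\<^bsub>G\<^esub> \<longrightarrow> inv\<^bsub>G\<^esub> x = x) \<longleftrightarrow> (\<forall>x\<in>carrier G. inv\<^bsub>G\<^esub> x = x)"
    using inv_one by metis
  then show ?thesis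
    using NI_not_min_edge_connected_if_mixed[OF assms(2)] NI_min_edge_connected_if_uniform[OF assms(2)]
    by blast
qed

end
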